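(* Every set star Lindelöf space of cardinality less than $\mathfrak d$ is set star Menger.
   Context: For a family $\mathcal U$ of subsets of $X$ and $A\subseteq X$, $st(A,\mathcal U)=\bigcup\{U\in\mathcal U: U\cap A\neq\emptyset\}$. $X$ is set star Lindelöf if for every nonempty $A\subseteq X$ and every family $\mathcal U$ of open subsets of $X$ with $\overline A\subseteq\bigcup\mathcal U$ there is a countable $\mathcal V\subseteq\mathcal U$ with $A\subseteq st(\bigcup\mathcal V,\mathcal U)$. $X$ is set star Menger if for every nonempty $A\subseteq X$ and every sequence $(\mathcal U_n:n\in\omega)$ of families of open sets with $\overline A\subseteq\bigcup\mathcal U_n$ for all $n$, there are finite $\mathcal V_n\subseteq\mathcal U_n$ with $A\subseteq\bigcup_n st(\bigcup\mathcal V_n,\mathcal U_n)$. $\mathfrak d$ is the minimal cardinality of a cofinal subset of $(\omega^\omega,\leq^* )$, where $f\leq^* g$ means $f(n)\leq g(n)$ for all but finitely many $n$. *)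

theory Defs
  imports "HOL-Analysis.Analysis"
begin

definition st :: "'a set \<Rightarrow> 'a set set \<Rightarrow> 'a set" where
  "st A \<U> = \<Union>{U \<in> \<U>. U \<inter> A \<noteq> {}}"

definition set_star_Lindelof :: "'a topology \<Rightarrow> bool" where
  "set_star_Lindelof X \<longleftrightarrow>
     (\<forall>A \<U>. A \<noteq> {} \<and> A \<subseteq> topspace X \<and> (\<forall>U\<in>\<U>. openin X U) \<and> X closure_of A \<subseteq> \<Union>\<U>
        \<longrightarrow> (\<exists>\<V>. \<V> \<subseteq> \<U> \<and> countable \<V> \<and> A \<subseteq> st (\<Union>\<V>) \<U>))"

definition set_star_Menger :: "'a topology \<Rightarrow> bool" where
  "set_star_Menger X \<longleftrightarrow>
     (\<forall>A (\<U> :: nat \<Rightarrow> 'a set set). A \<noteq> {} \<and> A \<subseteq> topspace X \<and>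
        (\<forall>n. (\<forall>U\<in>\<U> n. openin X U) \<and> X closure_of A \<subseteq> \<Union>(\<U> n))
        \<longrightarrow> (\<exists>\<V> :: nat \<Rightarrow> 'a set set. (\<forall>n. finite (\<V> n) \<and> \<V> n \<subseteq> \<U> n) \<and>
                A \<subseteq> (\<Union>n. st (\<Union>(\<V> n)) (\<U> n))))"

definition le_star :: "(nat \<Rightarrow> nat) \<Rightarrow> (nat \<Rightarrow> nat) \<Rightarrow> bool" where
  "le_star f g \<longleftrightarrow> finite {n. \<not> f n \<le> g n}"

definition cofinal_family :: "(nat \<Rightarrow> nat) set \<Rightarrow> bool" where
  "cofinal_family F \<longleftrightarrow> (\<forall>g. \<exists>f\<in>F. le_star g f)"

text \<open>|S| < \<dd>: the cardinality of S is strictly below the cardinality of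
  every cofinal subset of (\<omega>^\<omega>, \<le>*), i.e. below their minimum.\<close>
definition card_less_d :: "'a set \<Rightarrow> bool" where
  "card_less_d S \<longleftrightarrow> (\<forall>F. cofinal_family F \<longrightarrow> (card_of S, card_of F) \<in> ordLess)"

end

theory Submission
  imports Defs
begin

text \<open>Apply set star Lindelofness to each cover \<open>\<U> n\<close> and enumerate the countable
  subfamily as \<open>e n 0, e n 1, \<dots>\<close>. For \<open>x \<in> A\<close> let \<open>f x n\<close> be the least \<open>k\<close> with
  \<open>x \<in> st (e n k) (\<U> n)\<close>. Fewer than \<open>\<dd>\<close> functions \<open>f x\<close> are not cofinal, so some \<open>g\<close>
  escapes all of them: \<open>f x n < g n\<close> for infinitely many \<open>n\<close>. Then the finite families
  \<open>e n ` {..<g n}\<close> witness set star Mengerness.\<close>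

lemma st_Union: "st (\<Union>\<V>) \<U> = (\<Union>V\<in>\<V>. st V \<U>)"
  unfolding st_def by blast

lemma st_mono: "B \<subseteq> C \<Longrightarrow> st B \<U> \<subseteq> st C \<U>"
  unfolding st_def by blast

lemma card_less_d_subset: "card_less_d S \<Longrightarrow> T \<subseteq> S \<Longrightarrow> card_less_d T"
  unfolding card_less_d_def using card_of_mono1 ordLeq_ordLess_trans by blast

lemma card_less_d_escapes:
  fixes f :: "'a \<Rightarrow> nat \<Rightarrow> nat"
  assumes "card_less_d A"
  shows "\<exists>g. \<forall>x\<in>A. \<exists>\<^sub>\<infinity>n. f x n < g n"
proof -
  have "\<not> cofinal_family (f ` A)"
  proof
    assume "cofinal_family (f ` A)"
    then have "(card_of A, card_of (f ` A)) \<in> ordLess"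
      using assms unfolding card_less_d_def by blast
    then show False
      using card_of_image[of f A] not_ordLess_ordLeq by blast
  qed
  then obtain g where "\<forall>x\<in>A. infinite {n. f x n < g n}"
    unfolding cofinal_family_def le_star_def not_le by blast
  then show ?thesis
    unfolding INFM_iff_infinite by blast
qed

lemma set_star_Lindelof_sequence:
  assumes "set_star_Lindelof X" "A \<noteq> {}" "A \<subseteq> topspace X"
    and "\<forall>U\<in>\<U>. openin X U" "X closure_of A \<subseteq> \<Union>\<U>"
  obtains e :: "nat \<Rightarrow> 'a set" where "range e \<subseteq> \<U>" "A \<subseteq> (\<Union>k. st (e k) \<U>)"
proof -
  obtain \<V> where \<V>: "\<V> \<subseteq> \<U>" "countable \<V>" "A \<subseteq> st (\<Union>\<V>) \<U>"
    using assms(1)[unfolded set_star_Lindelof_def, rule_format, of A \<U>] assms(2-) by blast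
  have "\<V> \<noteq> {}"
    using \<V>(3) \<open>A \<noteq> {}\<close> unfolding st_def by auto
  define e where "e = from_nat_into \<V>"
  have "range e = \<V>"
    unfolding e_def using \<open>\<V> \<noteq> {}\<close> \<V>(2) by (rule range_from_nat_into)
  show ?thesis
  proof (rule that)
    show "range e \<subseteq> \<U>"
      using \<open>range e = \<V>\<close> \<V>(1) by simp
    have "A \<subseteq> (\<Union>V\<in>range e. st V \<U>)"
      using \<V>(3) \<open>range e = \<V>\<close> by (simp add: st_Union)
    then show "A \<subseteq> (\<Union>k. st (e k) \<U>)"
      by simp
  qed
qed

lemma star_covers_finite_selection:
  fixes e :: "nat \<Rightarrow> nat \<Rightarrow> 'a set"
  assumes "card_less_d A" "\<And>n. A \<subseteq> (\<Union>k. st (e n k) (\<U> n))"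
  shows "\<exists>g. A \<subseteq> (\<Union>n. st (\<Union>(e n ` {..<g n})) (\<U> n))"
proof -
  define f where "f x n = (LEAST k. x \<in> st (e n k) (\<U> n))" for x n
  have f: "x \<in> st (e n (f x n)) (\<U> n)" if "x \<in> A" for x n
  proof -
    obtain k where "x \<in> st (e n k) (\<U> n)"
      using assms(2)[of n] \<open>x \<in> A\<close> by blast
    then show ?thesis
      unfolding f_def by (rule LeastI[where P = "\<lambda>k. x \<in> st (e n k) (\<U> n)"])
  qed
  obtain g where g: "\<forall>x\<in>A. \<exists>\<^sub>\<infinity>n. f x n < g n"
    using card_less_d_escapes[OF assms(1), of f] by blast
  have "A \<subseteq> (\<Union>n. st (\<Union>(e n ` {..<g n})) (\<U> n))"
  proof
    fix x
    assume "x \<in> A"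
    with g have "\<exists>\<^sub>\<infinity>n. f x n < g n"
      by blast
    then obtain n where "f x n < g n"
      by (auto dest: INFM_EX)
    then have "e n (f x n) \<subseteq> \<Union>(e n ` {..<g n})"
      by auto
    then have "x \<in> st (\<Union>(e n ` {..<g n})) (\<U> n)"
      using st_mono f[OF \<open>x \<in> A\<close>] by blast
    then show "x \<in> (\<Union>n. st (\<Union>(e n ` {..<g n})) (\<U> n))"
      by blast
  qed
  then show ?thesis
    by blast
qed

theorem proposition2p5:
  fixes X :: "'a topology"
  assumes "set_star_Lindelof X"
    and "card_less_d (topspace X)"
  shows "set_star_Menger X"
  unfolding set_star_Menger_def
proof (intro allI impI, elim conjE)
  fix A and \<U> :: "nat \<Rightarrow> 'a set set"
  assume "A \<noteq> {}" "A \<subseteq> topspace X"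
    and covers: "\<forall>n. (\<forall>U\<in>\<U> n. openin X U) \<and> X closure_of A \<subseteq> \<Union>(\<U> n)"
  have "\<exists>e :: nat \<Rightarrow> 'a set. range e \<subseteq> \<U> n \<and> A \<subseteq> (\<Union>k. st (e k) (\<U> n))" for n
    by (rule set_star_Lindelof_sequence[OF assms(1) \<open>A \<noteq> {}\<close> \<open>A \<subseteq> topspace X\<close>, where \<U> = "\<U> n"])
      (use covers in auto)
  then obtain e :: "nat \<Rightarrow> nat \<Rightarrow> 'a set"
    where e_range: "\<And>n. range (e n) \<subseteq> \<U> n" and e_covers: "\<And>n. A \<subseteq> (\<Union>k. st (e n k) (\<U> n))"
    by metis
  have "card_less_d A"
    using assms(2) \<open>A \<subseteq> topspace X\<close> by (rule card_less_d_subset)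
  from star_covers_finite_selection[OF this e_covers]
  obtain g where g: "A \<subseteq> (\<Union>n. st (\<Union>(e n ` {..<g n})) (\<U> n))" ..
  define \<V> where "\<V> n = e n ` {..<g n}" for n
  have "\<forall>n. finite (\<V> n) \<and> \<V> n \<subseteq> \<U> n"
    using e_range unfolding \<V>_def by auto
  moreover have "A \<subseteq> (\<Union>n. st (\<Union>(\<V> n)) (\<U> n))"
    using g unfolding \<V>_def .
  ultimately show "\<exists>\<V>. (\<forall>n. finite (\<V> n) \<and> \<V> n \<subseteq> \<U> n) \<and> A \<subseteq> (\<Union>n. st (\<Union>(\<V> n)) (\<U> n))"
    by blast
qed

end
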